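(* Let $\epsilon$ be an inversion sequence and let $\epsilon'$ be the result of applying Algorithm A (described below) to $\epsilon$. If position $i$ is a transient occurrence of $p$ when Algorithm A is applied to $\epsilon$, then position $i$ is also a transient occurrence of $p$ when Algorithm A is applied to $\epsilon'$.
   Context: An inversion sequence of length $n$ is an integer sequence with $0\le\epsilon_i<i$ for all $i$. The reduction of an integer word replaces each occurrence of its $k$-th smallest distinct value by $k-1$; a consecutive pattern $\underline{p_1p_2p_3p_4}$ occurs in a sequence at position $i$ if the reduction of its entries in positions $i,\dots,i+3$ equals $p_1p_2p_3p_4$. Let $p=\underline{0102}$ and $q=\underline{0112}$. Algorithm A, on input an integer sequence $\mathrm{seq}=\epsilon_1\cdots\epsilon_n$: let $E_p$, $E_q$ be the sets of positions of occurrences of $p$, resp. $q$, in the input sequence; set $\mathrm{last}:=$ null. For $i=1,2,\dots,n$ in order: let $N_p,N_q$ be the sets of positions of occurrences of $p$, resp. $q$, in the current sequence. If $i-2\in E_p$: set $\mathrm{last}:=\mathrm{seq}[i]$ and $\mathrm{seq}[i]:=\mathrm{seq}[i-1]$. Else if $i-2\in E_q$: set $\mathrm{last}:=\mathrm{seq}[i]$ and $\mathrm{seq}[i]:=\mathrm{seq}[i-2]$. Else if $i-2\in N_p$ or $i-2\in N_q$: swap the values of $\mathrm{seq}[i]$ and $\mathrm{last}$. Output $\mathrm{seq}$. For an input $\alpha$ with output $\alpha'$: position $i$ is an original occurrence of $p$ (for this run) if $\alpha_i=\alpha_{i+2}$ and $\alpha_i<\alpha_{i+1}<\alpha_{i+3}$;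 it is a transient occurrence of $p$ (for this run) if it is not an original occurrence of $p$ but $\alpha'_i=\alpha_{i+2}$ and $\alpha'_i<\alpha_{i+1}<\alpha_{i+3}$. *)

theory Defs
  imports Main
begin

(* Sequences are lists of naturals; the paper's 1-based entry epsilon_i is nth1 s i. *)
definition nth1 :: "nat list \<Rightarrow> nat \<Rightarrow> nat" where
  "nth1 s i = s ! (i - 1)"

definition inversion_seq :: "nat list \<Rightarrow> bool" where
  "inversion_seq s \<longleftrightarrow> (\<forall>i. 1 \<le> i \<and> i \<le> length s \<longrightarrow> nth1 s i < i)"

definition reduction :: "nat list \<Rightarrow> nat list" where
  "reduction w = map (\<lambda>x. card {y \<in> set w. y < x}) w"

definition occ :: "nat list \<Rightarrow> nat list \<Rightarrow> nat \<Rightarrow> bool" where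
  "occ pat s i \<longleftrightarrow> 1 \<le> i \<and> i + 3 \<le> length s \<and>
     reduction [nth1 s i, nth1 s (i+1), nth1 s (i+2), nth1 s (i+3)] = pat"

definition pat_p :: "nat list" where "pat_p = [0,1,0,2]"
definition pat_q :: "nat list" where "pat_q = [0,1,1,2]"

(* one iteration of Algorithm A; E0 is the input sequence (for E_p, E_q);
   state = (current seq, last) with last = None for null.
   Convention: swapping with a null 'last' leaves everything unchanged. *)
definition algA_step :: "nat list \<Rightarrow> nat \<Rightarrow> nat list \<times> nat option \<Rightarrow> nat list \<times> nat option" where
  "algA_step E0 i st = (let s = fst st; lst = snd st in
     if occ pat_p E0 (i - 2) then (s[i - 1 := nth1 s (i - 1)], Some (nth1 s i))
     else if occ pat_q E0 (i - 2) then (s[i - 1 := nth1 s (i - 2)], Some (nth1 s i))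
     else if occ pat_p s (i - 2) \<or> occ pat_q s (i - 2) then
       (case lst of None \<Rightarrow> (s, lst) | Some v \<Rightarrow> (s[i - 1 := v], Some (nth1 s i)))
     else (s, lst))"

definition algA :: "nat list \<Rightarrow> nat list" where
  "algA s = fst (fold (algA_step s) [1..<length s + 1] (s, None))"

definition original_occ_p :: "nat list \<Rightarrow> nat \<Rightarrow> bool" where
  "original_occ_p a i \<longleftrightarrow> nth1 a i = nth1 a (i+2) \<and> nth1 a i < nth1 a (i+1) \<and> nth1 a (i+1) < nth1 a (i+3)"

definition transient_occ_p :: "nat list \<Rightarrow> nat \<Rightarrow> bool" where
  "transient_occ_p a i \<longleftrightarrow> 1 \<le> i \<and> i + 3 \<le> length a \<and> \<not> original_occ_p a i \<and>
     (let a' = algA a in nth1 a' i = nth1 a (i+2) \<and> nth1 a' i < nth1 a (i+1) \<and> nth1 a (i+1) < nth1 a (i+3))"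

end

theory Submission
  imports Defs
begin

(* Call step k of Algorithm A active if it overwrites entry k. Active steps are isolated, each
   sits on an ascent of the input, and an active step witnessed only by the current sequence (N)
   comes exactly two steps after another active step. Consequently every active step rewrites its
   window rigidly: an E_p step turns the window into an occurrence of q in the output, an E_q step
   into one of p, and an N step into an N step that restores the old entry. Induction along the
   positions shows that Algorithm A is an involution with the same active steps on the input and
   on the output. A transient occurrence of p at i forces steps i and i + 2 to be active, so the
   output reads e(i+2) e(i+1) e(i) e(i+3) at positions i..i+3, and the involution turns this back
   into a transient occurrence. *)

lemma card_less_less_iff:
  fixes S :: "'a::linorder set"
  assumes "finite S" "x \<in> S"
  shows "card {z \<in> S. z < x} < card {z \<in> S. z < y} \<longleftrightarrow> x < y"
proof
  assume "x < y"
  then have "{z \<in> S. z < x} \<subset> {z \<in> S. z < y}" using assms(2) by auto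
  then show "card {z \<in> S. z < x} < card {z \<in> S. z < y}"
    using assms(1) by (simp add: psubset_card_mono)
next
  assume "card {z \<in> S. z < x} < card {z \<in> S. z < y}"
  moreover have "card {z \<in> S. z < y} \<le> card {z \<in> S. z < x}" if "y \<le> x"
    using that assms(1) by (intro card_mono) auto
  ultimately show "x < y" by (meson not_le)
qed

lemma reduction_less_iff:
  assumes "i < length w" "j < length w"
  shows "reduction w ! i < reduction w ! j \<longleftrightarrow> w ! i < w ! j"
  using assms by (simp add: reduction_def card_less_less_iff)

lemma reduction_eq_iff:
  assumes "i < length w" "j < length w"
  shows "reduction w ! i = reduction w ! j \<longleftrightarrow> w ! i = w ! j"
  using reduction_less_iff[OF assms] reduction_less_iff[OF assms(2,1)] by (metis nat_neq_iff)

definition shape_p :: "nat \<Rightarrow> nat \<Rightarrow> nat \<Rightarrow> nat \<Rightarrow> bool" where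
  "shape_p a b c d \<longleftrightarrow> a = c \<and> a < b \<and> b < d"

definition shape_q :: "nat \<Rightarrow> nat \<Rightarrow> nat \<Rightarrow> nat \<Rightarrow> bool" where
  "shape_q a b c d \<longleftrightarrow> a < b \<and> b = c \<and> c < d"

lemma reduction_eq_pat_p_iff: "reduction [a, b, c, d] = pat_p \<longleftrightarrow> shape_p a b c d"
proof
  assume r: "reduction [a, b, c, d] = pat_p"
  have "a = c" using reduction_eq_iff[of 0 "[a, b, c, d]" 2] r by (simp add: pat_p_def)
  moreover have "a < b" using reduction_less_iff[of 0 "[a, b, c, d]" 1] r by (simp add: pat_p_def)
  moreover have "b < d" using reduction_less_iff[of 1 "[a, b, c, d]" 3] r by (simp add: pat_p_def)
  ultimately show "shape_p a b c d" by (simp add: shape_p_def)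
next
  assume p: "shape_p a b c d"
  then have "{y \<in> {a, b, c, d}. y < a} = {}" "{y \<in> {a, b, c, d}. y < b} = {a}"
    "{y \<in> {a, b, c, d}. y < d} = {a, b}"
    by (auto simp: shape_p_def)
  with p show "reduction [a, b, c, d] = pat_p" by (simp add: reduction_def pat_p_def shape_p_def)
qed

lemma reduction_eq_pat_q_iff: "reduction [a, b, c, d] = pat_q \<longleftrightarrow> shape_q a b c d"
proof
  assume r: "reduction [a, b, c, d] = pat_q"
  have "a < b" using reduction_less_iff[of 0 "[a, b, c, d]" 1] r by (simp add: pat_q_def)
  moreover have "b = c" using reduction_eq_iff[of 1 "[a, b, c, d]" 2] r by (simp add: pat_q_def)
  moreover have "c < d" using reduction_less_iff[of 2 "[a, b, c, d]" 3] r by (simp add: pat_q_def)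
  ultimately show "shape_q a b c d" by (simp add: shape_q_def)
next
  assume q: "shape_q a b c d"
  then have "{y \<in> {a, b, c, d}. y < a} = {}" "{y \<in> {a, b, c, d}. y < b} = {a}"
    "{y \<in> {a, b, c, d}. y < d} = {a, b}"
    by (auto simp: shape_q_def)
  with q show "reduction [a, b, c, d] = pat_q" by (simp add: reduction_def pat_q_def shape_q_def)
qed

lemma occ_pat_p_iff:
  "occ pat_p s i \<longleftrightarrow> 1 \<le> i \<and> i + 3 \<le> length s \<and>
     shape_p (nth1 s i) (nth1 s (i + 1)) (nth1 s (i + 2)) (nth1 s (i + 3))"
  unfolding occ_def reduction_eq_pat_p_iff ..

lemma occ_pat_q_iff:
  "occ pat_q s i \<longleftrightarrow> 1 \<le> i \<and> i + 3 \<le> length s \<and>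
     shape_q (nth1 s i) (nth1 s (i + 1)) (nth1 s (i + 2)) (nth1 s (i + 3))"
  unfolding occ_def reduction_eq_pat_q_iff ..

lemma shape_p_not_shape_q: "shape_p a b c d \<Longrightarrow> \<not> shape_q a b c d"
  by (auto simp: shape_p_def shape_q_def)

definition algA_state :: "nat list \<Rightarrow> nat \<Rightarrow> nat list \<times> nat option" where
  "algA_state E j = fold (algA_step E) [1..<j + 1] (E, None)"

definition algA_last :: "nat list \<Rightarrow> nat \<Rightarrow> nat option" where
  "algA_last E j = snd (algA_state E j)"

abbreviation out :: "nat list \<Rightarrow> nat \<Rightarrow> nat" where
  "out E \<equiv> nth1 (algA E)"

lemma algA_state_0 [simp]: "algA_state E 0 = (E, None)"
  by (simp add: algA_state_def)

lemma algA_state_Suc: "algA_state E (Suc j) = algA_step E (Suc j) (algA_state E j)"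
  by (simp add: algA_state_def)

lemma algA_eq_algA_state: "algA E = fst (algA_state E (length E))"
  by (simp add: algA_def algA_state_def)

lemma algA_step_updates_only:
  "fst (algA_step E k st) = fst st \<or> (\<exists>v. fst (algA_step E k st) = (fst st)[k - 1 := v])"
  by (auto simp: algA_step_def Let_def split: option.split)

lemma length_algA_state [simp]: "length (fst (algA_state E j)) = length E"
proof (induction j)
  case (Suc j)
  then show ?case
    using algA_step_updates_only[of E "Suc j" "algA_state E j"] by (auto simp: algA_state_Suc)
qed simp

lemma length_algA [simp]: "length (algA E) = length E"
  by (simp add: algA_eq_algA_state)

lemma nth1_algA_state_Suc:
  "1 \<le> m \<Longrightarrow> m \<noteq> Suc j \<Longrightarrow> nth1 (fst (algA_state E (Suc j))) m = nth1 (fst (algA_state E j)) m"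
  using algA_step_updates_only[of E "Suc j" "algA_state E j"]
  by (auto simp: algA_state_Suc nth1_def)

lemma nth1_algA_state_unvisited:
  "1 \<le> m \<Longrightarrow> j < m \<Longrightarrow> nth1 (fst (algA_state E j)) m = nth1 E m"
  by (induction j) (simp_all add: nth1_algA_state_Suc)

lemma nth1_algA_state_frozen:
  "1 \<le> m \<Longrightarrow> m \<le> j \<Longrightarrow> nth1 (fst (algA_state E j)) m = nth1 (fst (algA_state E m)) m"
  by (induction j) (auto simp: le_Suc_eq nth1_algA_state_Suc)

lemma nth1_algA_state_visited:
  "1 \<le> m \<Longrightarrow> m \<le> j \<Longrightarrow> j \<le> length E \<Longrightarrow> nth1 (fst (algA_state E j)) m = out E m"
  unfolding algA_eq_algA_state
  using nth1_algA_state_frozen[of m j E] nth1_algA_state_frozen[of m "length E" E] by simp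

(* Step k inspects the window at positions k - 2, ..., k + 1; for k < 3 the truncated k - 2 is 0,
   where no occurrence is ever found. *)
definition in_Ep :: "nat list \<Rightarrow> nat \<Rightarrow> bool" where
  "in_Ep E k \<longleftrightarrow> occ pat_p E (k - 2)"

definition in_Eq :: "nat list \<Rightarrow> nat \<Rightarrow> bool" where
  "in_Eq E k \<longleftrightarrow> occ pat_q E (k - 2)"

definition in_N :: "nat list \<Rightarrow> nat \<Rightarrow> bool" where
  "in_N E k \<longleftrightarrow> occ pat_p (fst (algA_state E (k - 1))) (k - 2) \<or>
     occ pat_q (fst (algA_state E (k - 1))) (k - 2)"

(* An N step with last = null leaves the state unchanged. *)
definition active :: "nat list \<Rightarrow> nat \<Rightarrow> bool" where
  "active E k \<longleftrightarrow> in_Ep E k \<or> in_Eq E k \<or> (in_N E k \<and> algA_last E (k - 1) \<noteq> None)"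

lemma in_Ep_iff:
  "in_Ep E k \<longleftrightarrow> 3 \<le> k \<and> k + 1 \<le> length E \<and>
     shape_p (nth1 E (k - 2)) (nth1 E (k - 1)) (nth1 E k) (nth1 E (k + 1))"
proof (cases "3 \<le> k")
  case True
  then have "k - 2 + 1 = k - 1" "k - 2 + 2 = k" "k - 2 + 3 = k + 1" "1 \<le> k - 2" by auto
  with True show ?thesis unfolding in_Ep_def occ_pat_p_iff by auto
qed (auto simp: in_Ep_def occ_pat_p_iff)

lemma in_Eq_iff:
  "in_Eq E k \<longleftrightarrow> 3 \<le> k \<and> k + 1 \<le> length E \<and>
     shape_q (nth1 E (k - 2)) (nth1 E (k - 1)) (nth1 E k) (nth1 E (k + 1))"
proof (cases "3 \<le> k")
  case True
  then have "k - 2 + 1 = k - 1" "k - 2 + 2 = k" "k - 2 + 3 = k + 1" "1 \<le> k - 2" by auto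
  with True show ?thesis unfolding in_Eq_def occ_pat_q_iff by auto
qed (auto simp: in_Eq_def occ_pat_q_iff)

lemma in_N_iff:
  "in_N E k \<longleftrightarrow> 3 \<le> k \<and> k + 1 \<le> length E \<and>
     (shape_p (out E (k - 2)) (out E (k - 1)) (nth1 E k) (nth1 E (k + 1)) \<or>
      shape_q (out E (k - 2)) (out E (k - 1)) (nth1 E k) (nth1 E (k + 1)))"
proof (cases "3 \<le> k \<and> k + 1 \<le> length E")
  case True
  then have "k - 2 + 1 = k - 1" "k - 2 + 2 = k" "k - 2 + 3 = k + 1" "1 \<le> k - 2" by auto
  moreover have "nth1 (fst (algA_state E (k - 1))) (k - 2) = out E (k - 2)"
    "nth1 (fst (algA_state E (k - 1))) (k - 1) = out E (k - 1)"
    using True by (auto intro!: nth1_algA_state_visited)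
  moreover have "nth1 (fst (algA_state E (k - 1))) k = nth1 E k"
    "nth1 (fst (algA_state E (k - 1))) (k + 1) = nth1 E (k + 1)"
    using True by (auto intro!: nth1_algA_state_unvisited)
  ultimately show ?thesis using True unfolding in_N_def occ_pat_p_iff occ_pat_q_iff by simp
qed (auto simp: in_N_def occ_pat_p_iff occ_pat_q_iff)

lemma active_bounds: "active E k \<Longrightarrow> 3 \<le> k \<and> k + 1 \<le> length E"
  unfolding active_def in_Ep_iff in_Eq_iff in_N_iff by blast

lemma in_Ep_not_in_Eq: "in_Ep E k \<Longrightarrow> \<not> in_Eq E k"
  unfolding in_Ep_iff in_Eq_iff using shape_p_not_shape_q by blast

lemma algA_step_effect:
  assumes "1 \<le> k" "k \<le> length E"
  shows "out E k = (if in_Ep E k then nth1 (fst (algA_state E (k - 1))) (k - 1)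
             else if in_Eq E k then nth1 (fst (algA_state E (k - 1))) (k - 2)
             else if in_N E k then (case algA_last E (k - 1) of None \<Rightarrow> nth1 E k | Some v \<Rightarrow> v)
             else nth1 E k)
       \<and> algA_last E k = (if active E k then Some (nth1 E k) else algA_last E (k - 1))"
proof -
  define s where "s = fst (algA_state E (k - 1))"
  have state: "algA_state E k = algA_step E k (s, algA_last E (k - 1))"
    using algA_state_Suc[of E "k - 1"] assms(1) by (simp add: s_def algA_last_def)
  have "nth1 s k = nth1 E k"
    unfolding s_def using assms by (auto intro: nth1_algA_state_unvisited)
  moreover have "\<And>v. nth1 (s[k - 1 := v]) k = v"
    using assms by (simp add: s_def nth1_def)
  moreover have "out E k = nth1 (fst (algA_state E k)) k"
    using assms nth1_algA_state_visited by simp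
  ultimately show ?thesis
    unfolding algA_last_def state
    by (auto simp: algA_step_def Let_def in_Ep_def in_Eq_def in_N_def active_def
        algA_last_def s_def split: option.split)
qed

lemma out_in_Ep:
  assumes "in_Ep E k"
  shows "out E k = out E (k - 1)"
proof -
  have k: "3 \<le> k" "k + 1 \<le> length E" using assms by (auto simp: in_Ep_iff)
  then have "out E k = nth1 (fst (algA_state E (k - 1))) (k - 1)"
    using algA_step_effect[of k E] assms by simp
  also have "\<dots> = out E (k - 1)" using k by (intro nth1_algA_state_visited) auto
  finally show ?thesis .
qed

lemma out_in_Eq:
  assumes "in_Eq E k"
  shows "out E k = out E (k - 2)"
proof -
  have k: "3 \<le> k" "k + 1 \<le> length E" using assms by (auto simp: in_Eq_iff)
  then have "out E k = nth1 (fst (algA_state E (k - 1))) (k - 2)"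
    using algA_step_effect[of k E] assms in_Ep_not_in_Eq by auto
  also have "\<dots> = out E (k - 2)" using k by (intro nth1_algA_state_visited) auto
  finally show ?thesis .
qed

lemma out_in_N:
  "\<not> in_Ep E k \<Longrightarrow> \<not> in_Eq E k \<Longrightarrow> in_N E k \<Longrightarrow> algA_last E (k - 1) = Some v \<Longrightarrow> out E k = v"
  using algA_step_effect[of k E] by (simp add: in_N_iff)

lemma out_inactive: "1 \<le> k \<Longrightarrow> k \<le> length E \<Longrightarrow> \<not> active E k \<Longrightarrow> out E k = nth1 E k"
  using algA_step_effect[of k E] by (auto simp: active_def split: option.split)

lemma algA_last_active: "active E k \<Longrightarrow> algA_last E k = Some (nth1 E k)"
  using algA_step_effect[of k E] active_bounds[of E k] by auto

lemma algA_last_inactive: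
  "1 \<le> k \<Longrightarrow> k \<le> length E \<Longrightarrow> \<not> active E k \<Longrightarrow> algA_last E k = algA_last E (k - 1)"
  using algA_step_effect[of k E] by auto

lemma active_ascent: "active E k \<Longrightarrow> nth1 E k < nth1 E (k + 1)"
  unfolding active_def in_Ep_iff in_Eq_iff in_N_iff shape_p_def shape_q_def by auto

lemma algA_last_after_active:
  assumes "active E j" "\<not> active E (j + 1)"
  shows "algA_last E (j + 1) = Some (nth1 E j)"
  using algA_last_inactive[of "j + 1" E] algA_last_active[of E j] assms active_bounds[of E j]
  by simp

lemma in_N_step_effect:
  assumes "in_N E k" "\<not> in_Ep E k" "\<not> in_Eq E k" "active E (k - 2)" "\<not> active E (k - 1)"
  shows "out E k = nth1 E (k - 2) \<and> active E k"
proof -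
  have "3 \<le> k" using assms(1) by (simp add: in_N_iff)
  then have "algA_last E (k - 1) = Some (nth1 E (k - 2))"
    using algA_last_after_active[of E "k - 2"] assms(4,5) by (simp add: Suc_diff_Suc numeral_2_eq_2)
  then show ?thesis using assms(1-3) out_in_N by (simp add: active_def)
qed

lemma in_N_predecessors_aux:
  assumes N: "in_N E k" "\<not> in_Ep E k" "\<not> in_Eq E k"
    and prev: "active E (k - 1) \<Longrightarrow> out E (k - 1) < nth1 E k"
  shows "active E (k - 2) \<and> \<not> active E (k - 1)"
proof -
  have k: "3 \<le> k" "k + 1 \<le> length E" using N(1) by (auto simp: in_N_iff)
  have window: "shape_p (out E (k - 2)) (out E (k - 1)) (nth1 E k) (nth1 E (k + 1)) \<or>
      shape_q (out E (k - 2)) (out E (k - 1)) (nth1 E k) (nth1 E (k + 1))"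
    using N(1) by (simp add: in_N_iff)
  then have inactive: "\<not> active E (k - 1)"
    using prev by (auto simp: shape_p_def shape_q_def)
  have "active E (k - 2)"
  proof (rule ccontr)
    assume "\<not> active E (k - 2)"
    then have "out E (k - 2) = nth1 E (k - 2)" using k by (intro out_inactive) auto
    moreover have "out E (k - 1) = nth1 E (k - 1)" using k inactive by (intro out_inactive) auto
    ultimately show False using window N(2,3) k by (simp add: in_Ep_iff in_Eq_iff)
  qed
  with inactive show ?thesis by blast
qed

lemma in_N_step_out_less_next:
  assumes "in_N E k" "\<not> in_Ep E k" "\<not> in_Eq E k" "active E (k - 2)" "\<not> active E (k - 1)"
  shows "out E k < nth1 E (k + 1)"
proof -
  have k: "3 \<le> k" using assms(1) by (simp add: in_N_iff)
  have "out E k = nth1 E (k - 2)" using in_N_step_effect assms by blast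
  moreover have "nth1 E (k - 2) < nth1 E (k - 1)"
    using active_ascent[OF assms(4)] k by (simp add: Suc_diff_Suc numeral_2_eq_2)
  moreover have "out E (k - 1) = nth1 E (k - 1)"
    using assms(1,5) by (intro out_inactive) (auto simp: in_N_iff)
  ultimately show ?thesis using assms(1) by (auto simp: in_N_iff shape_p_def shape_q_def)
qed

lemma out_less_next: "active E k \<Longrightarrow> out E k < nth1 E (k + 1)"
proof (induction k rule: less_induct)
  case (less k)
  have k: "3 \<le> k" "k + 1 \<le> length E" using active_bounds[OF less.prems] by auto
  have out_before: "out E m < nth1 E (k + 1)"
    if "1 \<le> m" "m < k" "nth1 E m < nth1 E (k + 1)" "nth1 E (m + 1) < nth1 E (k + 1)" for m
  proof (cases "active E m")
    case True
    with less.IH that show ?thesis by fastforce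
  next
    case False
    with that k have "out E m = nth1 E m" by (intro out_inactive) auto
    with that show ?thesis by simp
  qed
  consider "in_Ep E k" | "in_Eq E k" | "in_N E k" "\<not> in_Ep E k" "\<not> in_Eq E k"
    using less.prems unfolding active_def by blast
  then show ?case
  proof cases
    case 1
    then have "out E k = out E (k - 1)" by (rule out_in_Ep)
    also have "\<dots> < nth1 E (k + 1)"
      using 1 k by (intro out_before) (auto simp: in_Ep_iff shape_p_def)
    finally show ?thesis .
  next
    case 2
    then have "out E k = out E (k - 2)" by (rule out_in_Eq)
    also have "\<dots> < nth1 E (k + 1)"
      using 2 k by (intro out_before) (auto simp: in_Eq_iff shape_q_def Suc_diff_Suc numeral_2_eq_2)
    finally show ?thesis .
  next
    case 3
    have "active E (k - 1) \<Longrightarrow> out E (k - 1) < nth1 E k"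
      using less.IH[of "k - 1"] k by simp
    then show ?thesis using in_N_predecessors_aux[OF 3] in_N_step_out_less_next[OF 3] by blast
  qed
qed

lemma in_N_predecessors:
  assumes "in_N E k" "\<not> in_Ep E k" "\<not> in_Eq E k"
  shows "active E (k - 2) \<and> \<not> active E (k - 1)"
proof -
  have "3 \<le> k" using assms(1) by (simp add: in_N_iff)
  then have "active E (k - 1) \<Longrightarrow> out E (k - 1) < nth1 E k"
    using out_less_next[of E "k - 1"] by simp
  with assms show ?thesis by (rule in_N_predecessors_aux)
qed

lemma in_N_step:
  assumes "in_N E k" "\<not> in_Ep E k" "\<not> in_Eq E k"
  shows "out E k = nth1 E (k - 2) \<and> active E k"
  using in_N_step_effect[OF assms] in_N_predecessors[OF assms] by blast

lemma active_descent: "active E k \<Longrightarrow> nth1 E k \<le> nth1 E (k - 1)"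
proof -
  assume a: "active E k"
  consider "in_Ep E k \<or> in_Eq E k" | "in_N E k" "\<not> in_Ep E k" "\<not> in_Eq E k"
    using a unfolding active_def by blast
  then show ?thesis
  proof cases
    case 1
    then show ?thesis by (auto simp: in_Ep_iff in_Eq_iff shape_p_def shape_q_def)
  next
    case 2
    then have "out E (k - 1) = nth1 E (k - 1)"
      using in_N_predecessors[OF 2] by (intro out_inactive) (auto simp: in_N_iff)
    with 2(1) show ?thesis by (auto simp: in_N_iff shape_p_def shape_q_def)
  qed
qed

lemma active_Suc_cases:
  assumes "active E (k + 1)"
  shows "nth1 E (k - 1) < nth1 E k \<or> (active E (k - 1) \<and> \<not> active E k)"
proof (cases "in_Ep E (k + 1) \<or> in_Eq E (k + 1)")
  case True
  then show ?thesis by (auto simp: in_Ep_iff in_Eq_iff shape_p_def shape_q_def)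
next
  case False
  with assms have "in_N E (k + 1)" "\<not> in_Ep E (k + 1)" "\<not> in_Eq E (k + 1)"
    by (auto simp: active_def)
  then show ?thesis using in_N_predecessors by fastforce
qed

lemma active_not_active_Suc: "active E k \<Longrightarrow> \<not> active E (k + 1)"
  using active_Suc_cases[of E k] active_descent[of E k] by auto

lemma out_after_descent:
  assumes "nth1 E k \<le> nth1 E (k - 1)" "\<not> active E (k - 1)" "k + 1 \<le> length E"
  shows "out E (k + 1) = nth1 E (k + 1)"
  using assms active_Suc_cases[of E k] by (intro out_inactive) auto

lemma active_neighbours_unchanged:
  assumes "active E k"
  shows "out E (k - 1) = nth1 E (k - 1)" "out E (k + 1) = nth1 E (k + 1)"
proof -
  have k: "3 \<le> k" "k + 1 \<le> length E" using active_bounds[OF assms] by auto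
  then have "\<not> active E (k - 1)" using active_not_active_Suc[of E "k - 1"] assms by auto
  then show "out E (k - 1) = nth1 E (k - 1)" using k by (intro out_inactive) auto
  have "\<not> active E (k + 1)" using active_not_active_Suc[OF assms] .
  then show "out E (k + 1) = nth1 E (k + 1)" using k by (intro out_inactive) auto
qed

lemma in_N_active: "in_N E k \<Longrightarrow> active E k"
  using in_N_step[of E k] by (auto simp: active_def)

lemma active_out_two_before:
  assumes a: "active E k"
  shows "out E (k - 2) < nth1 E (k - 1)"
proof -
  have k: "3 \<le> k" "k + 1 \<le> length E" using active_bounds[OF a] by auto
  show ?thesis
  proof (cases "active E (k - 2)")
    case True
    moreover have "k - 2 + 1 = k - 1" using k by simp
    ultimately show ?thesis using out_less_next[of E "k - 2"] by simp
  next
    case False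
    then have "out E (k - 2) = nth1 E (k - 2)" using k by (intro out_inactive) auto
    moreover have "in_Ep E k \<or> in_Eq E k"
      using a False in_N_predecessors unfolding active_def by blast
    ultimately show ?thesis by (auto simp: in_Ep_iff in_Eq_iff shape_p_def shape_q_def)
  qed
qed

definition involutive_at :: "nat list \<Rightarrow> nat \<Rightarrow> bool" where
  "involutive_at E k \<longleftrightarrow> out (algA E) k = nth1 E k \<and> (active (algA E) k \<longleftrightarrow> active E k)"

lemma in_N_step_algA:
  assumes N: "in_N E k" "\<not> in_Ep E k" "\<not> in_Eq E k"
    and prev: "out (algA E) (k - 1) = nth1 E (k - 1)" "out (algA E) (k - 2) = nth1 E (k - 2)"
  shows "out (algA E) k = nth1 E k \<and> active (algA E) k"
proof -
  define F where "F = algA E"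
  have a: "active E k" using in_N_active[OF N(1)] .
  have k: "3 \<le> k" "k + 1 \<le> length E" "length F = length E"
    using active_bounds[OF a] by (auto simp: F_def)
  have F_prev: "nth1 F (k - 1) = nth1 E (k - 1)" and F_next: "nth1 F (k + 1) = nth1 E (k + 1)"
    using active_neighbours_unchanged[OF a] by (simp_all add: F_def)
  have pred: "active E (k - 2)" using in_N_predecessors[OF N] by blast
  have F_k: "nth1 F k = nth1 E (k - 2)" using in_N_step[OF N] by (simp add: F_def)
  have rise: "nth1 E (k - 2) < nth1 E (k - 1)"
    using active_ascent[OF pred] k by (simp add: Suc_diff_Suc numeral_2_eq_2)
  have shape: "shape_p (nth1 F (k - 2)) (nth1 E (k - 1)) (nth1 E k) (nth1 E (k + 1))"
    using N rise k F_prev by (auto simp: in_N_iff in_Ep_iff in_Eq_iff shape_p_def shape_q_def F_def)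
  then have "\<not> in_Ep F k" "\<not> in_Eq F k" "in_N F k"
    using N(2) F_k F_prev F_next rise prev k
    by (auto simp: in_Ep_iff in_Eq_iff in_N_iff shape_p_def shape_q_def F_def)
  then show ?thesis using in_N_step[of F k] shape by (auto simp: F_def shape_p_def)
qed

lemma involutive_at_active:
  assumes a: "active E k" and IH: "\<And>m. 1 \<le> m \<Longrightarrow> m < k \<Longrightarrow> involutive_at E m"
  shows "involutive_at E k"
proof -
  define F where "F = algA E"
  have k: "3 \<le> k" "k + 1 \<le> length E" "length F = length E"
    using active_bounds[OF a] by (auto simp: F_def)
  have F_prev: "nth1 F (k - 1) = nth1 E (k - 1)" and F_next: "nth1 F (k + 1) = nth1 E (k + 1)"
    using active_neighbours_unchanged[OF a] by (simp_all add: F_def)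
  have IH1: "out F (k - 1) = nth1 E (k - 1)" and IH2: "out F (k - 2) = nth1 E (k - 2)"
    using IH[of "k - 1"] IH[of "k - 2"] k by (auto simp: involutive_at_def F_def)
  have two_before: "nth1 F (k - 2) < nth1 E (k - 1)"
    using active_out_two_before[OF a] by (simp add: F_def)
  consider "in_Ep E k" | "in_Eq E k" | "in_N E k" "\<not> in_Ep E k" "\<not> in_Eq E k"
    using a unfolding active_def by blast
  then have "out F k = nth1 E k \<and> active F k"
  proof cases
    case 1
    then have "nth1 F k = nth1 E (k - 1)" using out_in_Ep F_prev by (simp add: F_def)
    then have "in_Eq F k"
      using 1 k F_prev F_next two_before by (auto simp: in_Ep_iff in_Eq_iff shape_p_def shape_q_def)
    then show ?thesis using out_in_Eq[of F k] IH2 1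
      by (auto simp: active_def in_Ep_iff shape_p_def)
  next
    case 2
    then have "nth1 F k = nth1 F (k - 2)" using out_in_Eq by (simp add: F_def)
    then have "in_Ep F k"
      using 2 k F_prev F_next two_before by (auto simp: in_Ep_iff in_Eq_iff shape_p_def shape_q_def)
    then show ?thesis using out_in_Ep[of F k] IH1 2
      by (auto simp: active_def in_Eq_iff shape_q_def)
  next
    case 3
    then show ?thesis using in_N_step_algA IH1 IH2 by (simp add: F_def)
  qed
  with a show ?thesis by (simp add: involutive_at_def F_def)
qed

lemma not_active_algA:
  assumes na: "\<not> active E k" "1 \<le> k" "k \<le> length E"
    and IH: "\<And>m. 1 \<le> m \<Longrightarrow> m < k \<Longrightarrow> involutive_at E m"
  shows "\<not> active (algA E) k"
proof -
  define F where "F = algA E"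
  have F_k: "nth1 F k = nth1 E k" using na by (simp add: out_inactive F_def)
  show ?thesis unfolding F_def[symmetric]
  proof
    assume aF: "active F k"
    have k: "3 \<le> k" "k + 1 \<le> length E" using active_bounds[OF aF] by (auto simp: F_def)
    have IH1: "out F (k - 1) = nth1 E (k - 1)" "active F (k - 1) \<longleftrightarrow> active E (k - 1)"
      using IH[of "k - 1"] k by (auto simp: involutive_at_def F_def)
    have IH2: "out F (k - 2) = nth1 E (k - 2)"
      using IH[of "k - 2"] k by (auto simp: involutive_at_def F_def)
    have before: "\<not> active E (k - 1)"
      using active_not_active_Suc[of F "k - 1"] aF IH1(2) k by auto
    then have F_prev: "nth1 F (k - 1) = nth1 E (k - 1)"
      using k by (simp add: out_inactive F_def)
    show False
    proof (cases "in_Ep F k \<or> in_Eq F k")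
      case True
      then have window:
        "shape_p (out E (k - 2)) (nth1 E (k - 1)) (nth1 E k) (out E (k + 1)) \<or>
         shape_q (out E (k - 2)) (nth1 E (k - 1)) (nth1 E k) (out E (k + 1))"
        using F_k F_prev by (auto simp: in_Ep_iff in_Eq_iff F_def)
      then have "out E (k + 1) = nth1 E (k + 1)"
        using before k by (intro out_after_descent) (auto simp: shape_p_def shape_q_def)
      with window have "in_N E k" using k F_prev by (simp add: in_N_iff F_def)
      then show False using in_N_active na(1) by blast
    next
      case False
      then have "in_N F k" using aF by (simp add: active_def)
      then have window:
        "shape_p (nth1 E (k - 2)) (nth1 E (k - 1)) (nth1 E k) (out E (k + 1)) \<or>
         shape_q (nth1 E (k - 2)) (nth1 E (k - 1)) (nth1 E k) (out E (k + 1))"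
        using IH1(1) IH2 F_k by (simp add: in_N_iff F_def)
      then have "out E (k + 1) = nth1 E (k + 1)"
        using before k by (intro out_after_descent) (auto simp: shape_p_def shape_q_def)
      with window have "in_Ep E k \<or> in_Eq E k" using k by (simp add: in_Ep_iff in_Eq_iff)
      then show False using na(1) by (simp add: active_def)
    qed
  qed
qed

lemma involutive_at_inactive:
  assumes na: "\<not> active E k" "1 \<le> k" "k \<le> length E"
    and IH: "\<And>m. 1 \<le> m \<Longrightarrow> m < k \<Longrightarrow> involutive_at E m"
  shows "involutive_at E k"
  using not_active_algA[OF assms] out_inactive[of k "algA E"] out_inactive[OF na(2,3,1)] na
  by (simp add: involutive_at_def)

lemma involutive_at_all: "1 \<le> k \<Longrightarrow> k \<le> length E \<Longrightarrow> involutive_at E k"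
proof (induction k rule: less_induct)
  case (less k)
  then show ?case
    using involutive_at_active[of E k] involutive_at_inactive[of E k] by force
qed

theorem algA_algA: "algA (algA E) = E"
proof (rule nth_equalityI)
  fix j
  assume "j < length (algA (algA E))"
  then have "involutive_at E (j + 1)" by (intro involutive_at_all) auto
  then show "algA (algA E) ! j = E ! j" by (simp add: involutive_at_def nth1_def)
qed simp

lemma transient_occ_p_out:
  assumes "transient_occ_p e i"
  shows "out e (i + 1) = nth1 e (i + 1)" "out e (i + 2) = nth1 e i"
    "out e (i + 3) = nth1 e (i + 3)" "nth1 e i < nth1 e (i + 1)" "nth1 e i \<noteq> nth1 e (i + 2)"
proof -
  have t: "1 \<le> i" "i + 3 \<le> length e" "\<not> original_occ_p e i" "out e i = nth1 e (i + 2)"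
    "out e i < nth1 e (i + 1)" "nth1 e (i + 1) < nth1 e (i + 3)"
    using assms by (auto simp: transient_occ_p_def Let_def)
  then show ne: "nth1 e i \<noteq> nth1 e (i + 2)" by (auto simp: original_occ_p_def)
  have "active e i"
    using out_inactive[of i e] t ne by auto
  then show "nth1 e i < nth1 e (i + 1)" using active_ascent by blast
  have "\<not> active e (i + 1)" using active_not_active_Suc \<open>active e i\<close> by blast
  then show out1: "out e (i + 1) = nth1 e (i + 1)"
    using t by (intro out_inactive) auto
  have idx: "i + 2 - 2 = i" "i + 2 - 1 = i + 1" "i + 2 + 1 = i + 3" by auto
  have "in_N e (i + 2)" "\<not> in_Ep e (i + 2)" "\<not> in_Eq e (i + 2)"
    unfolding in_N_iff in_Ep_iff in_Eq_iff idx using t ne out1 by (auto simp: shape_p_def shape_q_def)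
  then have step2: "out e (i + 2) = nth1 e i" "active e (i + 2)"
    using in_N_step[of e "i + 2"] idx by auto
  show "out e (i + 2) = nth1 e i" by (fact step2(1))
  from step2(2) have "\<not> active e (i + 3)" using active_not_active_Suc[of e "i + 2", unfolded idx] by blast
  then show "out e (i + 3) = nth1 e (i + 3)" using t by (intro out_inactive) auto
qed

theorem corollary3:
  fixes e :: "nat list" and i :: nat
  assumes "inversion_seq e"
    and "transient_occ_p e i"
  shows "transient_occ_p (algA e) i"
proof -
  have "1 \<le> i" "i + 3 \<le> length e" "out e i = nth1 e (i + 2)" "nth1 e (i + 1) < nth1 e (i + 3)"
    using assms(2) by (auto simp: transient_occ_p_def Let_def)
  with transient_occ_p_out[OF assms(2)] show ?thesis
    by (auto simp: transient_occ_p_def original_occ_p_def Let_def algA_algA)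
qed

end
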